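(* Let $\langle D,\Gamma,\Delta\rangle$ be a planning problem with $(D,\Gamma)$ consistent and deterministic (i.e. $|\Phi(a,s)|\le 1$ for every action $a$ and state $s$) and $\Delta=p_1\wedge\dots\wedge p_k$ a conjunction of fluent literals, and let $n\ge0$. Then: (1) for each plan $a_0,\dots,a_{n-1}$ achieving $\Delta$ from $\Gamma$ there exists an answer set $M$ of $\Pi_n$ with $occ(a_i,i)\in M$ for all $i\in\{0,\dots,n-1\}$; (2) for each answer set $M$ of $\Pi_n$ there exists an integer $0\le k\le n$ such that, with $a_i$ the (unique) actions with $occ(a_i,i)\in M$ for $0\le i<k$, the sequence $a_0,\dots,a_{k-1}$ is a plan achieving $\Delta$ from $\Gamma$, and if $k<n$ then no action is executable in the state reached by executing $a_0,\dots,a_{k-1}$ in $s_0^\Gamma$.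
   Context: Action language $\mathcal{B}$: fix finite sets $\mathbf{F}$ of fluents and $\mathbf{A}$ of actions. A fluent literal is $f$ or $\neg f$ ($f\in\mathbf{F}$); the complement $\bar l$ of $f$ is $\neg f$ and of $\neg f$ is $f$. A set of fluent literals is consistent if it contains no pair $f,\neg f$; an interpretation is a maximal consistent set. For a set $u$ of literals, $u\models p_1\wedge\dots\wedge p_k$ means $\{p_1,\dots,p_k\}\subseteq u$. A domain description $D$ is a finite set of static causal laws $\mathbf{caused}(\{p_1,\dots,p_k\},f)$ (their set is $D_C$), dynamic causal laws $\mathbf{causes}(a,f,\{p_1,\dots,p_k\})$ and executability conditions $\mathbf{executable}(a,\{p_1,\dots,p_k\})$, with $a\in\mathbf{A}$ and $f,p_i$ fluent literals; $\Gamma$ is a set of propositions $\mathbf{initially}(f)$. A consistent set $u$ is closed under $D_C$ if for every $\mathbf{caused}(P,f)\in D_C$ with $P\subseteq u$, $f\in u$; $Cl_{D_C}(u)$ is the least consistent superset of $u$ closed under $D_C$ (undefined if none). A state is an interpretation closed under $D_C$. Action $a$ is executable in state $s$ if some $\mathbf{executable}(a,P)\in D$ has $P\subseteq s$. $E(a,s)=\{f\mid \mathbf{causes}(a,f,P)\in D,\ P\subseteq s\}$. $\Phi(a,s)=\{s'\mid s'\text{ a state},\ s'=Cl_{D_C}(E(a,s)\cup(s\cap s'))\}$ if $a$ is executable in $s$, and $\Phi(a,s)=\emptyset$ otherwise. A trajectory is a sequence $s_0a_0s_1\dots a_{m-1}s_m$ of states $s_i$ and actions $a_i$ with $s_{i+1}\in\Phi(a_i,s_i)$.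 $D$ is consistent if $\Phi(a,s)\ne\emptyset$ whenever $a$ is executable in state $s$; $(D,\Gamma)$ is consistent if $D$ is consistent and $s_0^\Gamma:=\{f\mid\mathbf{initially}(f)\in\Gamma\}$ is a state of $D$. A sequence of actions $a_0,\dots,a_{m-1}$ is a plan achieving $\Delta$ from $\Gamma$ (in the deterministic case) if there is a trajectory $s_0a_0s_1\dots a_{m-1}s_m$ with $s_0=s_0^\Gamma$ and $s_m\models\Delta$. Answer sets: a ground normal program consists of rules $h\leftarrow b_1,\dots,b_m,\mathit{not}\,c_1,\dots,\mathit{not}\,c_r$ and constraints $\bot\leftarrow b_1,\dots,b_m,\mathit{not}\,c_1,\dots,\mathit{not}\,c_r$. For a set $S$ of atoms, the reduct $\Pi^S$ deletes every rule/constraint containing $\mathit{not}\,c$ with $c\in S$ and deletes all $\mathit{not}$-literals from the rest; $S$ is an answer set of $\Pi$ if $S$ is the least set of atoms closed under the non-constraint rules of $\Pi^S$ and no constraint of $\Pi^S$ has its whole body contained in $S$. The program $\pi$ (ground; $t$ ranges over $\{0,\dots,n\}$ unless stated): (1) $holds(l,0)\leftarrow$ for each $\mathbf{initially}(l)\in\Gamma$; (2) $possible(a,t)\leftarrow holds(p_1,t),\dots,holds(p_k,t)$ for each $\mathbf{executable}(a,\{p_1,\dots,p_k\})\in D$; (3) for $t\in\{0,\dots,n-1\}$, $holds(f,t+1)\leftarrow occ(a,t),possible(a,t),holds(p_1,t),\dots,holds(p_k,t)$ for each $\mathbf{causes}(a,f,\{p_1,\dots,p_k\})\in D$; (4) $holds(f,t)\leftarrow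 holds(p_1,t),\dots,holds(p_k,t)$ for each $\mathbf{caused}(\{p_1,\dots,p_k\},f)\in D$; (5) $occ(a,t)\leftarrow possible(a,t),\mathit{not}\,nocc(a,t)$ for each action $a$; (6) $nocc(a,t)\leftarrow occ(b,t)$ for each pair of distinct actions $a\ne b$; (7) for $t\in\{0,\dots,n-1\}$, $holds(l,t+1)\leftarrow holds(l,t),\mathit{not}\,holds(\bar l,t+1)$ for each fluent literal $l$; (8) $\bot\leftarrow holds(f,t),holds(\neg f,t)$ for each fluent $f$. $\Pi_n$ is $\pi$ together with the rule $goal\leftarrow holds(p_1,n),\dots,holds(p_k,n)$ (where $\Delta=p_1\wedge\dots\wedge p_k$) and the constraint $\bot\leftarrow\mathit{not}\,goal$. For a set $M$ of atoms, $s_i(M)=\{l\mid l\text{ a fluent literal},\ holds(l,i)\in M\}$. *)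

theory Defs
  imports Main
begin

datatype 'f lit = Pos 'f | Neg 'f

fun comp :: "'f lit \<Rightarrow> 'f lit" where
  "comp (Pos f) = Neg f"
| "comp (Neg f) = Pos f"

text \<open>A domain description: static causal laws caused(P,l) as pairs (P,l),
  dynamic causal laws causes(a,l,P) as triples (a,l,P),
  executability conditions executable(a,P) as pairs (a,P).\<close>
record ('f, 'a) domain =
  static  :: "('f lit set \<times> 'f lit) set"
  dynamic :: "('a \<times> 'f lit \<times> 'f lit set) set"
  execs   :: "('a \<times> 'f lit set) set"

definition consistent_lits :: "'f lit set \<Rightarrow> bool" where
  "consistent_lits u \<longleftrightarrow> (\<forall>f. \<not> (Pos f \<in> u \<and> Neg f \<in> u))"

definition is_interpretation :: "'f lit set \<Rightarrow> bool" where
  "is_interpretation u \<longleftrightarrow> consistent_lits u \<and> (\<forall>f. Pos f \<in> u \<or> Neg f \<in> u)"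

definition closed_under :: "('f, 'a) domain \<Rightarrow> 'f lit set \<Rightarrow> bool" where
  "closed_under D u \<longleftrightarrow> (\<forall>P l. (P, l) \<in> static D \<and> P \<subseteq> u \<longrightarrow> l \<in> u)"

text \<open>Least superset closed under the static laws (consistency not required).
  Cl_{D_C}(u) is defined iff this set is consistent, and then equals it.\<close>
definition closure :: "('f, 'a) domain \<Rightarrow> 'f lit set \<Rightarrow> 'f lit set" where
  "closure D u = \<Inter>{X. u \<subseteq> X \<and> closed_under D X}"

definition Cl_eq :: "('f, 'a) domain \<Rightarrow> 'f lit set \<Rightarrow> 'f lit set \<Rightarrow> bool" where
  "Cl_eq D u v \<longleftrightarrow> consistent_lits (closure D u) \<and> v = closure D u"

definition is_state :: "('f, 'a) domain \<Rightarrow> 'f lit set \<Rightarrow> bool" where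
  "is_state D s \<longleftrightarrow> is_interpretation s \<and> closed_under D s"

definition executable :: "('f, 'a) domain \<Rightarrow> 'a \<Rightarrow> 'f lit set \<Rightarrow> bool" where
  "executable D a s \<longleftrightarrow> (\<exists>P. (a, P) \<in> execs D \<and> P \<subseteq> s)"

definition E :: "('f, 'a) domain \<Rightarrow> 'a \<Rightarrow> 'f lit set \<Rightarrow> 'f lit set" where
  "E D a s = {l. \<exists>P. (a, l, P) \<in> dynamic D \<and> P \<subseteq> s}"

definition Phi :: "('f, 'a) domain \<Rightarrow> 'a \<Rightarrow> 'f lit set \<Rightarrow> 'f lit set set" where
  "Phi D a s = (if executable D a s
      then {s'. is_state D s' \<and> Cl_eq D (E D a s \<union> (s \<inter> s')) s'} else {})"

definition trajectory :: "('f, 'a) domain \<Rightarrow> 'a list \<Rightarrow> 'f lit set list \<Rightarrow> bool" where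
  "trajectory D as ss \<longleftrightarrow> length ss = Suc (length as)
     \<and> (\<forall>i<length ss. is_state D (ss ! i))
     \<and> (\<forall>i<length as. ss ! Suc i \<in> Phi D (as ! i) (ss ! i))"

definition domain_consistent :: "('f, 'a) domain \<Rightarrow> bool" where
  "domain_consistent D \<longleftrightarrow>
     (\<forall>a s. is_state D s \<and> executable D a s \<longrightarrow> Phi D a s \<noteq> {})"

text \<open>Gamma is represented by the set of literals l with initially(l) in Gamma,
  i.e. by s_0^Gamma itself.\<close>
definition problem_consistent :: "('f, 'a) domain \<Rightarrow> 'f lit set \<Rightarrow> bool" where
  "problem_consistent D \<Gamma> \<longleftrightarrow> domain_consistent D \<and> is_state D \<Gamma>"

definition deterministic :: "('f, 'a) domain \<Rightarrow> bool" where
  "deterministic D \<longleftrightarrow> (\<forall>a s. is_state D s \<longrightarrow>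
      (\<forall>s1 \<in> Phi D a s. \<forall>s2 \<in> Phi D a s. s1 = s2))"

text \<open>Delta = p_1 /\ ... /\ p_k is represented by the set {p_1,...,p_k}.\<close>
definition is_plan :: "('f, 'a) domain \<Rightarrow> 'f lit set \<Rightarrow> 'f lit set \<Rightarrow> 'a list \<Rightarrow> bool" where
  "is_plan D \<Gamma> \<Delta> as \<longleftrightarrow>
     (\<exists>ss. trajectory D as ss \<and> ss ! 0 = \<Gamma> \<and> \<Delta> \<subseteq> last ss)"

datatype ('f, 'a) atom =
    Holds "'f lit" nat | Possible 'a nat | Occ 'a nat | Nocc 'a nat | Goal

text \<open>A rule (h, B+, B-): head h (None = bottom, i.e. a constraint),
  positive body B+, negated body B- (the atoms c with "not c").\<close>
type_synonym 'at rule = "'at option \<times> 'at set \<times> 'at set"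

definition reduct :: "'at rule set \<Rightarrow> 'at set \<Rightarrow> ('at option \<times> 'at set) set" where
  "reduct \<Pi> S = {(h, pos) | h pos neg. (h, pos, neg) \<in> \<Pi> \<and> neg \<inter> S = {}}"

definition least_model :: "('at option \<times> 'at set) set \<Rightarrow> 'at set" where
  "least_model R = \<Inter>{X. \<forall>h pos. (Some h, pos) \<in> R \<and> pos \<subseteq> X \<longrightarrow> h \<in> X}"

definition answer_set :: "'at rule set \<Rightarrow> 'at set \<Rightarrow> bool" where
  "answer_set \<Pi> S \<longleftrightarrow> S = least_model (reduct \<Pi> S)
     \<and> (\<forall>pos. (None, pos) \<in> reduct \<Pi> S \<longrightarrow> \<not> pos \<subseteq> S)"

definition hs :: "'f lit set \<Rightarrow> nat \<Rightarrow> ('f, 'a) atom set" where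
  "hs P t = (\<lambda>p. Holds p t) ` P"

definition prog_pi :: "('f, 'a) domain \<Rightarrow> 'f lit set \<Rightarrow> nat \<Rightarrow> ('f, 'a) atom rule set" where
  "prog_pi D \<Gamma> n =
      {(Some (Holds l 0), {}, {}) | l. l \<in> \<Gamma>}
    \<union> {(Some (Possible a t), hs P t, {}) | a P t. (a, P) \<in> execs D \<and> t \<le> n}
    \<union> {(Some (Holds f (Suc t)), {Occ a t, Possible a t} \<union> hs P t, {}) | a f P t.
          (a, f, P) \<in> dynamic D \<and> t < n}
    \<union> {(Some (Holds f t), hs P t, {}) | P f t. (P, f) \<in> static D \<and> t \<le> n}
    \<union> {(Some (Occ a t), {Possible a t}, {Nocc a t}) | a t. t \<le> n}
    \<union> {(Some (Nocc a t), {Occ b t}, {}) | a b t. a \<noteq> b \<and> t \<le> n}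
    \<union> {(Some (Holds l (Suc t)), {Holds l t}, {Holds (comp l) (Suc t)}) | l t. t < n}
    \<union> {(None, {Holds (Pos f) t, Holds (Neg f) t}, {}) | f t. t \<le> n}"

definition prog_Pi :: "('f, 'a) domain \<Rightarrow> 'f lit set \<Rightarrow> 'f lit set \<Rightarrow> nat \<Rightarrow> ('f, 'a) atom rule set" where
  "prog_Pi D \<Gamma> \<Delta> n = prog_pi D \<Gamma> n
     \<union> {(Some Goal, hs \<Delta> n, {}), (None, {}, {Goal})}"

end

theory Submission
  imports Defs
begin

(* An answer set M of Pi_n describes the run s_0(M), s_1(M), ...  By minimality every literal
   holding at t+1 is supported by a dynamic law, a static law or inertia, so s_{t+1}(M) satisfies
   the fixpoint equation Cl(E(a,s_t) \<union> (s_t \<inter> s_{t+1})) that defines Phi, and rules (5)-(6)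
   make exactly one action occur at t iff some action is executable in s_t(M).  Cutting the run at
   the first time k without an occurrence gives a plan: from k on nothing is executable, so the
   state is frozen and the goal, which holds at n, already holds at k; determinism makes the
   trajectory of this plan unique.  Conversely, the atoms read off a trajectory of a plan (with one
   arbitrary executable action added at time n) form a set closed under the reduct, and it is the
   least one because each of its atoms is derived along the trajectory by induction on time. *)

section \<open>Answer sets as least sets closed under the reduct\<close>

definition closed_under_reduct :: "'at rule set \<Rightarrow> 'at set \<Rightarrow> 'at set \<Rightarrow> bool" where
  "closed_under_reduct \<Pi> S X \<longleftrightarrow>
     (\<forall>h pos neg. (Some h, pos, neg) \<in> \<Pi> \<and> neg \<inter> S = {} \<and> pos \<subseteq> X \<longrightarrow> h \<in> X)"

lemma closed_under_reductD:
  "closed_under_reduct \<Pi> S X \<Longrightarrow> (Some h, pos, neg) \<in> \<Pi> \<Longrightarrow> neg \<inter> S = {} \<Longrightarrow> pos \<subseteq> X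
   \<Longrightarrow> h \<in> X"
  unfolding closed_under_reduct_def by blast

lemma least_model_reduct: "least_model (reduct \<Pi> S) = \<Inter>{X. closed_under_reduct \<Pi> S X}"
proof -
  have "(\<forall>h pos. (Some h, pos) \<in> reduct \<Pi> S \<and> pos \<subseteq> X \<longrightarrow> h \<in> X) \<longleftrightarrow>
      closed_under_reduct \<Pi> S X" for X
    unfolding reduct_def closed_under_reduct_def by blast
  then show ?thesis
    unfolding least_model_def by simp
qed

lemma closed_under_reduct_Inter:
  "(\<And>X. X \<in> \<X> \<Longrightarrow> closed_under_reduct \<Pi> S X) \<Longrightarrow> closed_under_reduct \<Pi> S (\<Inter>\<X>)"
  unfolding closed_under_reduct_def by blast

lemma answer_set_iff:
  "answer_set \<Pi> M \<longleftrightarrow> closed_under_reduct \<Pi> M M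
     \<and> (\<forall>X. closed_under_reduct \<Pi> M X \<longrightarrow> M \<subseteq> X)
     \<and> (\<forall>pos neg. (None, pos, neg) \<in> \<Pi> \<and> neg \<inter> M = {} \<longrightarrow> \<not> pos \<subseteq> M)"
proof -
  define C where "C = {X. closed_under_reduct \<Pi> M X}"
  have "\<Inter>C \<in> C"
    unfolding C_def using closed_under_reduct_Inter[of "{X. closed_under_reduct \<Pi> M X}"] by simp
  then have "M = \<Inter>C \<longleftrightarrow> M \<in> C \<and> (\<forall>X\<in>C. M \<subseteq> X)"
    by blast
  then have least: "M = least_model (reduct \<Pi> M) \<longleftrightarrow>
      closed_under_reduct \<Pi> M M \<and> (\<forall>X. closed_under_reduct \<Pi> M X \<longrightarrow> M \<subseteq> X)"
    unfolding least_model_reduct C_def by simp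
  have constraints: "(\<forall>pos. (None, pos) \<in> reduct \<Pi> M \<longrightarrow> \<not> pos \<subseteq> M) \<longleftrightarrow>
      (\<forall>pos neg. (None, pos, neg) \<in> \<Pi> \<and> neg \<inter> M = {} \<longrightarrow> \<not> pos \<subseteq> M)"
    unfolding reduct_def by blast
  show ?thesis
    unfolding answer_set_def least constraints by (simp only: conj_assoc)
qed

lemma answer_set_closed:
  "answer_set \<Pi> M \<Longrightarrow> (Some h, pos, neg) \<in> \<Pi> \<Longrightarrow> neg \<inter> M = {} \<Longrightarrow> pos \<subseteq> M \<Longrightarrow> h \<in> M"
  unfolding answer_set_iff closed_under_reduct_def by blast

lemma answer_set_minimal: "answer_set \<Pi> M \<Longrightarrow> closed_under_reduct \<Pi> M X \<Longrightarrow> M \<subseteq> X"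
  unfolding answer_set_iff by blast

lemma answer_set_constraint:
  "answer_set \<Pi> M \<Longrightarrow> (None, pos, neg) \<in> \<Pi> \<Longrightarrow> neg \<inter> M = {} \<Longrightarrow> \<not> pos \<subseteq> M"
  unfolding answer_set_iff by blast

lemma answer_set_supported:
  assumes "answer_set \<Pi> M" and "h \<in> M"
  obtains pos neg where "(Some h, pos, neg) \<in> \<Pi>" "neg \<inter> M = {}" "pos \<subseteq> M"
proof (rule ccontr)
  assume unsupported: "\<not> thesis"
  have "closed_under_reduct \<Pi> M (M - {h})"
    unfolding closed_under_reduct_def
  proof (intro allI impI)
    fix h' pos neg
    assume rule: "(Some h', pos, neg) \<in> \<Pi> \<and> neg \<inter> M = {} \<and> pos \<subseteq> M - {h}"
    then have "h' \<in> M"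
      using answer_set_closed[OF assms(1)] by blast
    moreover have "h' \<noteq> h"
      using that[of pos neg] rule unsupported by auto
    ultimately show "h' \<in> M - {h}" by blast
  qed
  then show False
    using answer_set_minimal[OF assms(1)] assms(2) by blast
qed

lemma subset_closure: "u \<subseteq> closure D u"
  unfolding closure_def by blast

lemma closed_under_closure: "closed_under D (closure D u)"
  unfolding closure_def closed_under_def by blast

lemma closure_minimal: "u \<subseteq> X \<Longrightarrow> closed_under D X \<Longrightarrow> closure D u \<subseteq> X"
  unfolding closure_def by blast

lemma interpretation_eqI: "is_interpretation A \<Longrightarrow> consistent_lits B \<Longrightarrow> A \<subseteq> B \<Longrightarrow> A = B"
  unfolding is_interpretation_def consistent_lits_def
  by (metis lit.exhaust subsetD subsetI subset_antisym)

lemma interpretation_comp: "is_interpretation s \<Longrightarrow> comp l \<notin> s \<Longrightarrow> l \<in> s"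
  unfolding is_interpretation_def by (cases l) auto

lemma consistent_comp: "consistent_lits s \<Longrightarrow> l \<in> s \<Longrightarrow> comp l \<notin> s"
  unfolding consistent_lits_def by (cases l) auto

lemma mem_Phi_iff:
  "s' \<in> Phi D a s \<longleftrightarrow>
     executable D a s \<and> is_state D s' \<and> s' = closure D (E D a s \<union> (s \<inter> s'))"
  unfolding Phi_def Cl_eq_def is_state_def is_interpretation_def by auto

lemma trajectory_last: "trajectory D as ss \<Longrightarrow> last ss = ss ! length as"
  unfolding trajectory_def by (metis diff_Suc_1 last_conv_nth length_0_conv nat.distinct(1))

lemma trajectory_map:
  assumes "\<And>i. i \<le> length as \<Longrightarrow> is_state D (s i)"
    and "\<And>i. i < length as \<Longrightarrow> s (Suc i) \<in> Phi D (as ! i) (s i)"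
  shows "trajectory D as (map s [0..<Suc (length as)])"
  unfolding trajectory_def using assms by (simp del: upt_Suc)

lemma trajectory_unique:
  assumes "deterministic D" and "trajectory D as ss" and "trajectory D as ss'"
    and "ss ! 0 = ss' ! 0"
  shows "ss = ss'"
proof -
  have "ss ! i = ss' ! i" if "i \<le> length as" for i
    using that
  proof (induction i)
    case 0
    then show ?case using assms(4) by simp
  next
    case (Suc i)
    then have "ss ! Suc i \<in> Phi D (as ! i) (ss' ! i)" "ss' ! Suc i \<in> Phi D (as ! i) (ss' ! i)"
      "is_state D (ss' ! i)"
      using assms(2,3) unfolding trajectory_def by (auto simp: Suc_le_eq)
    then show ?case
      using assms(1) unfolding deterministic_def by blast
  qed
  then show ?thesis
    using assms(2,3) unfolding trajectory_def by (auto intro: nth_equalityI)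
qed

lemma hs_subset_iff: "hs P t \<subseteq> X \<longleftrightarrow> (\<forall>p\<in>P. Holds p t \<in> X)"
  unfolding hs_def by blast

lemma prog_Pi_init_rule: "l \<in> \<Gamma> \<Longrightarrow> (Some (Holds l 0), {}, {}) \<in> prog_Pi D \<Gamma> \<Delta> n"
  by (auto simp: prog_Pi_def prog_pi_def)

lemma prog_Pi_executable_rule:
  "(a, P) \<in> execs D \<Longrightarrow> t \<le> n \<Longrightarrow> (Some (Possible a t), hs P t, {}) \<in> prog_Pi D \<Gamma> \<Delta> n"
  by (auto simp: prog_Pi_def prog_pi_def)

lemma prog_Pi_dynamic_rule:
  "(a, f, P) \<in> dynamic D \<Longrightarrow> t < n \<Longrightarrow>
   (Some (Holds f (Suc t)), {Occ a t, Possible a t} \<union> hs P t, {}) \<in> prog_Pi D \<Gamma> \<Delta> n"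
  by (auto simp: prog_Pi_def prog_pi_def)

lemma prog_Pi_static_rule:
  "(P, f) \<in> static D \<Longrightarrow> t \<le> n \<Longrightarrow> (Some (Holds f t), hs P t, {}) \<in> prog_Pi D \<Gamma> \<Delta> n"
  by (auto simp: prog_Pi_def prog_pi_def)

lemma prog_Pi_Occ_rule:
  "t \<le> n \<Longrightarrow> (Some (Occ a t), {Possible a t}, {Nocc a t}) \<in> prog_Pi D \<Gamma> \<Delta> n"
  by (auto simp: prog_Pi_def prog_pi_def)

lemma prog_Pi_Nocc_rule:
  "a \<noteq> b \<Longrightarrow> t \<le> n \<Longrightarrow> (Some (Nocc a t), {Occ b t}, {}) \<in> prog_Pi D \<Gamma> \<Delta> n"
  by (auto simp: prog_Pi_def prog_pi_def)

lemma prog_Pi_inertia_rule: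
  "t < n \<Longrightarrow>
   (Some (Holds l (Suc t)), {Holds l t}, {Holds (comp l) (Suc t)}) \<in> prog_Pi D \<Gamma> \<Delta> n"
  by (auto simp: prog_Pi_def prog_pi_def)

lemma prog_Pi_consistency_constraint:
  "t \<le> n \<Longrightarrow> (None, {Holds (Pos f) t, Holds (Neg f) t}, {}) \<in> prog_Pi D \<Gamma> \<Delta> n"
  by (auto simp: prog_Pi_def prog_pi_def)

lemma prog_Pi_Goal_rule: "(Some Goal, hs \<Delta> n, {}) \<in> prog_Pi D \<Gamma> \<Delta> n"
  by (simp add: prog_Pi_def)

lemma prog_Pi_Goal_constraint: "(None, {}, {Goal}) \<in> prog_Pi D \<Gamma> \<Delta> n"
  by (simp add: prog_Pi_def)

lemma prog_Pi_Holds_ruleE: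
  assumes "(Some (Holds l t), pos, neg) \<in> prog_Pi D \<Gamma> \<Delta> n"
  obtains (init) "t = 0" "l \<in> \<Gamma>"
  | (dynamic) a P t' where "t = Suc t'" "t' < n" "(a, l, P) \<in> dynamic D"
      "pos = {Occ a t', Possible a t'} \<union> hs P t'"
  | (static) P where "(P, l) \<in> static D" "t \<le> n" "pos = hs P t"
  | (inertia) t' where "t = Suc t'" "t' < n" "pos = {Holds l t'}" "neg = {Holds (comp l) t}"
  using assms unfolding prog_Pi_def prog_pi_def by (elim UnE insertE emptyE; simp; blast)

lemma prog_Pi_Possible_ruleE:
  assumes "(Some (Possible a t), pos, neg) \<in> prog_Pi D \<Gamma> \<Delta> n"
  obtains P where "(a, P) \<in> execs D" "t \<le> n" "pos = hs P t"
  using assms unfolding prog_Pi_def prog_pi_def by (elim UnE insertE emptyE; simp; blast)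

lemma prog_Pi_Occ_ruleE:
  assumes "(Some (Occ a t), pos, neg) \<in> prog_Pi D \<Gamma> \<Delta> n"
  obtains "t \<le> n" "pos = {Possible a t}" "neg = {Nocc a t}"
  using assms unfolding prog_Pi_def prog_pi_def by (elim UnE insertE emptyE; simp)

lemma prog_Pi_Nocc_ruleE:
  assumes "(Some (Nocc a t), pos, neg) \<in> prog_Pi D \<Gamma> \<Delta> n"
  obtains b where "a \<noteq> b" "t \<le> n" "pos = {Occ b t}"
  using assms unfolding prog_Pi_def prog_pi_def by (elim UnE insertE emptyE; simp; blast)

lemma prog_Pi_Goal_ruleE:
  assumes "(Some Goal, pos, neg) \<in> prog_Pi D \<Gamma> \<Delta> n"
  obtains "pos = hs \<Delta> n"
  using assms unfolding prog_Pi_def prog_pi_def by (elim UnE insertE emptyE; simp)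

lemma prog_Pi_constraintE:
  assumes "(None, pos, neg) \<in> prog_Pi D \<Gamma> \<Delta> n"
  obtains (consistency) f t where "t \<le> n" "pos = {Holds (Pos f) t, Holds (Neg f) t}"
  | (goal) "neg = {Goal}"
  using assms unfolding prog_Pi_def prog_pi_def by (elim UnE insertE emptyE; simp; blast)

section \<open>From answer sets to plans\<close>

definition state_at :: "('f, 'a) atom set \<Rightarrow> nat \<Rightarrow> 'f lit set" where
  "state_at M t = {l. Holds l t \<in> M}"

locale Pi_answer_set =
  fixes D :: "('f, 'a) domain" and \<Gamma> \<Delta> :: "'f lit set" and n :: nat
    and M :: "('f, 'a) atom set"
  assumes answer_set: "answer_set (prog_Pi D \<Gamma> \<Delta> n) M"
    and initial_state: "is_state D \<Gamma>"
begin

lemma consistent_state_at: "t \<le> n \<Longrightarrow> consistent_lits (state_at M t)"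
  unfolding consistent_lits_def state_at_def
  using answer_set_constraint[OF answer_set prog_Pi_consistency_constraint] by fastforce

lemma closed_under_state_at: "t \<le> n \<Longrightarrow> closed_under D (state_at M t)"
  unfolding closed_under_def state_at_def
  using answer_set_closed[OF answer_set prog_Pi_static_rule] by (auto simp: hs_subset_iff)

lemma state_at_0: "state_at M 0 = \<Gamma>"
proof -
  have "\<Gamma> \<subseteq> state_at M 0"
    unfolding state_at_def using answer_set_closed[OF answer_set prog_Pi_init_rule] by auto
  then show ?thesis
    using interpretation_eqI consistent_state_at[of 0] initial_state
    unfolding is_state_def by auto
qed

lemma Holds_inertia:
  "t < n \<Longrightarrow> Holds l t \<in> M \<Longrightarrow> Holds (comp l) (Suc t) \<notin> M \<Longrightarrow> Holds l (Suc t) \<in> M"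
  using answer_set_closed[OF answer_set prog_Pi_inertia_rule[of t n l]] by auto

lemma state_at_complete: "t \<le> n \<Longrightarrow> Pos f \<in> state_at M t \<or> Neg f \<in> state_at M t"
proof (induction t)
  case 0
  then show ?case
    using state_at_0 initial_state unfolding is_state_def is_interpretation_def by auto
next
  case (Suc t)
  then have "t < n" "Pos f \<in> state_at M t \<or> Neg f \<in> state_at M t"
    by simp_all
  then show ?case
    using Holds_inertia[of t "Pos f"] Holds_inertia[of t "Neg f"] unfolding state_at_def by auto
qed

lemma is_state_state_at: "t \<le> n \<Longrightarrow> is_state D (state_at M t)"
  unfolding is_state_def is_interpretation_def
  by (simp add: consistent_state_at state_at_complete closed_under_state_at)

lemma Possible_iff_executable: "t \<le> n \<Longrightarrow> Possible a t \<in> M \<longleftrightarrow> executable D a (state_at M t)"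
proof
  assume "Possible a t \<in> M"
  then obtain pos neg where rule: "(Some (Possible a t), pos, neg) \<in> prog_Pi D \<Gamma> \<Delta> n" "pos \<subseteq> M"
    by (rule answer_set_supported[OF answer_set])
  obtain P where "(a, P) \<in> execs D" "t \<le> n" "pos = hs P t"
    using rule(1) by (rule prog_Pi_Possible_ruleE)
  then show "executable D a (state_at M t)"
    using rule(2) unfolding executable_def state_at_def by (auto simp: hs_subset_iff)
next
  assume "t \<le> n" and "executable D a (state_at M t)"
  then show "Possible a t \<in> M"
    unfolding executable_def state_at_def
    using answer_set_closed[OF answer_set prog_Pi_executable_rule] by (auto simp: hs_subset_iff)
qed

lemma OccD: "Occ a t \<in> M \<Longrightarrow> t \<le> n \<and> Possible a t \<in> M \<and> Nocc a t \<notin> M"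
  by (erule answer_set_supported[OF answer_set]) (auto elim: prog_Pi_Occ_ruleE)

lemma Occ_unique: "Occ a t \<in> M \<Longrightarrow> Occ b t \<in> M \<Longrightarrow> a = b"
  using answer_set_closed[OF answer_set prog_Pi_Nocc_rule[of a b t n]] OccD by blast

lemma Occ_if_executable:
  assumes "t \<le> n" and "executable D a (state_at M t)"
  shows "\<exists>b. Occ b t \<in> M"
proof (rule ccontr)
  assume no_Occ: "\<nexists>b. Occ b t \<in> M"
  have "Nocc a t \<notin> M"
  proof
    assume "Nocc a t \<in> M"
    then obtain pos neg where rule: "(Some (Nocc a t), pos, neg) \<in> prog_Pi D \<Gamma> \<Delta> n" "pos \<subseteq> M"
      by (rule answer_set_supported[OF answer_set])
    obtain b where "a \<noteq> b" "t \<le> n" "pos = {Occ b t}"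
      using rule(1) by (rule prog_Pi_Nocc_ruleE)
    then show False
      using rule(2) no_Occ by simp
  qed
  then have "Occ a t \<in> M"
    using answer_set_closed[OF answer_set prog_Pi_Occ_rule[of t n a]] Possible_iff_executable assms
    by auto
  then show False
    using no_Occ by blast
qed

lemma state_at_Suc:
  assumes "t < n"
  defines "U \<equiv> {l. \<exists>a P. Occ a t \<in> M \<and> (a, l, P) \<in> dynamic D \<and> P \<subseteq> state_at M t}
                \<union> (state_at M t \<inter> state_at M (Suc t))"
  shows "state_at M (Suc t) = closure D U"
proof
  have "U \<subseteq> state_at M (Suc t)"
  proof
    fix l assume "l \<in> U"
    then consider (dynamic) a P where "Occ a t \<in> M" "(a, l, P) \<in> dynamic D" "P \<subseteq> state_at M t"
      | (inertia) "l \<in> state_at M (Suc t)"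
      unfolding U_def by blast
    then show "l \<in> state_at M (Suc t)"
    proof cases
      case (dynamic a P)
      then have "{Occ a t, Possible a t} \<union> hs P t \<subseteq> M"
        using OccD by (auto simp: hs_subset_iff state_at_def)
      then show ?thesis
        using answer_set_closed[OF answer_set prog_Pi_dynamic_rule[OF dynamic(2) assms(1)]]
        by (simp add: state_at_def)
    qed
  qed
  moreover have "closed_under D (state_at M (Suc t))"
    using closed_under_state_at assms(1) by simp
  ultimately show "closure D U \<subseteq> state_at M (Suc t)"
    by (rule closure_minimal)
next
  \<comment> \<open>by minimality: dropping the atoms \<open>Holds l (Suc t)\<close> with \<open>l \<notin> closure D U\<close> from \<open>M\<close>
    leaves a set closed under the reduct\<close>
  define X where "X = {h \<in> M. \<forall>l. h = Holds l (Suc t) \<longrightarrow> l \<in> closure D U}"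
  have "closed_under_reduct (prog_Pi D \<Gamma> \<Delta> n) M X"
    unfolding closed_under_reduct_def
  proof (intro allI impI)
    fix h pos neg
    assume "(Some h, pos, neg) \<in> prog_Pi D \<Gamma> \<Delta> n \<and> neg \<inter> M = {} \<and> pos \<subseteq> X"
    then have rule: "(Some h, pos, neg) \<in> prog_Pi D \<Gamma> \<Delta> n" "neg \<inter> M = {}" "pos \<subseteq> M"
      and "pos \<subseteq> X"
      unfolding X_def by auto
    have "h \<in> M"
      using answer_set_closed[OF answer_set rule] .
    moreover have "l \<in> closure D U" if h: "h = Holds l (Suc t)" for l
      using rule(1) unfolding h
    proof (cases rule: prog_Pi_Holds_ruleE)
      case (dynamic a P t')
      then have "l \<in> U"
        using rule(3) unfolding U_def by (auto simp: hs_subset_iff state_at_def)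
      then show ?thesis
        using subset_closure by blast
    next
      case (static P)
      then have "P \<subseteq> closure D U"
        using \<open>pos \<subseteq> X\<close> unfolding X_def by (auto simp: hs_def)
      then show ?thesis
        using closed_under_closure static(1) unfolding closed_under_def by blast
    next
      case (inertia t')
      then have "l \<in> U"
        using rule(3) \<open>h \<in> M\<close> h unfolding U_def by (simp add: state_at_def)
      then show ?thesis
        using subset_closure by blast
    qed simp
    ultimately show "h \<in> X"
      unfolding X_def by blast
  qed
  then have "M \<subseteq> X"
    by (rule answer_set_minimal[OF answer_set])
  then show "state_at M (Suc t) \<subseteq> closure D U"
    unfolding state_at_def X_def by blast
qed

lemma state_at_Suc_in_Phi:
  assumes "t < n" and "Occ a t \<in> M"
  shows "state_at M (Suc t) \<in> Phi D a (state_at M t)"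
proof -
  have "{l. \<exists>b P. Occ b t \<in> M \<and> (b, l, P) \<in> dynamic D \<and> P \<subseteq> state_at M t} = E D a (state_at M t)"
    unfolding E_def using Occ_unique assms(2) by blast
  moreover have "executable D a (state_at M t)"
    using OccD[OF assms(2)] Possible_iff_executable by blast
  ultimately show ?thesis
    unfolding mem_Phi_iff using state_at_Suc[OF assms(1)] is_state_state_at[of "Suc t"] assms(1)
    by auto
qed

lemma state_at_Suc_idle:
  assumes "t < n" and "\<And>b. Occ b t \<notin> M"
  shows "state_at M (Suc t) = state_at M t"
proof (rule interpretation_eqI)
  have "state_at M (Suc t) = closure D (state_at M t \<inter> state_at M (Suc t))"
    using state_at_Suc[OF assms(1)] assms(2) by simp
  also have "\<dots> \<subseteq> state_at M t"
    using closed_under_state_at assms(1) by (simp add: closure_minimal)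
  finally show "state_at M (Suc t) \<subseteq> state_at M t" .
  show "is_interpretation (state_at M (Suc t))" "consistent_lits (state_at M t)"
    using is_state_state_at consistent_state_at assms(1) unfolding is_state_def by simp_all
qed

lemma goal_in_state_at: "\<Delta> \<subseteq> state_at M n"
proof -
  have "Goal \<in> M"
    using answer_set_constraint[OF answer_set prog_Pi_Goal_constraint] by auto
  then obtain pos neg where "(Some Goal, pos, neg) \<in> prog_Pi D \<Gamma> \<Delta> n" "pos \<subseteq> M"
    by (rule answer_set_supported[OF answer_set])
  then show ?thesis
    by (auto simp: hs_subset_iff state_at_def elim: prog_Pi_Goal_ruleE)
qed

definition first_idle :: nat where
  "first_idle = (LEAST t. t = n \<or> (\<forall>b. Occ b t \<notin> M))"

lemma first_idle_le: "first_idle \<le> n"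
  unfolding first_idle_def by (rule Least_le) simp

lemma Occ_before_first_idle: "i < first_idle \<Longrightarrow> \<exists>b. Occ b i \<in> M"
  using not_less_Least[of i "\<lambda>t. t = n \<or> (\<forall>b. Occ b t \<notin> M)"] first_idle_le
  unfolding first_idle_def by auto

lemma not_executable_at_first_idle:
  assumes "first_idle < n"
  shows "\<not> executable D a (state_at M first_idle)"
proof
  have "\<forall>b. Occ b first_idle \<notin> M"
    using LeastI[of "\<lambda>t. t = n \<or> (\<forall>b. Occ b t \<notin> M)" n] assms unfolding first_idle_def by auto
  moreover assume "executable D a (state_at M first_idle)"
  then have "\<exists>b. Occ b first_idle \<in> M"
    using Occ_if_executable assms by simp
  ultimately show False
    by blast
qed

lemma state_at_deadlocked:
  assumes "\<And>a. \<not> executable D a (state_at M t)" and "t \<le> u" and "u \<le> n"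
  shows "state_at M u = state_at M t"
  using assms(2,3)
proof (induction u rule: dec_induct)
  case base
  show ?case by (rule refl)
next
  case (step u)
  then have u: "u < n" "state_at M u = state_at M t"
    by simp_all
  have "Occ b u \<notin> M" for b
    using OccD[of b u] Possible_iff_executable[of u b] assms(1) u by auto
  then show ?case
    using state_at_Suc_idle u by simp
qed

definition extracted_plan :: "'a list" where
  "extracted_plan = map (\<lambda>i. THE b. Occ b i \<in> M) [0..<first_idle]"

lemma length_extracted_plan [simp]: "length extracted_plan = first_idle"
  unfolding extracted_plan_def by simp

lemma Occ_iff_extracted_plan: "i < first_idle \<Longrightarrow> Occ b i \<in> M \<longleftrightarrow> b = extracted_plan ! i"
proof -
  assume "i < first_idle"
  moreover obtain a where "Occ a i \<in> M"
    using Occ_before_first_idle \<open>i < first_idle\<close> by blast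
  moreover have "(THE b. Occ b i \<in> M) = a"
    using \<open>Occ a i \<in> M\<close> Occ_unique by blast
  ultimately show ?thesis
    unfolding extracted_plan_def using Occ_unique by auto
qed

lemma trajectory_extracted_plan:
  defines "ss \<equiv> map (state_at M) [0..<Suc first_idle]"
  shows "trajectory D extracted_plan ss" and "ss ! 0 = \<Gamma>" and "last ss = state_at M first_idle"
proof -
  show "trajectory D extracted_plan ss"
    unfolding ss_def length_extracted_plan[symmetric]
  proof (rule trajectory_map)
    show "is_state D (state_at M i)" if "i \<le> length extracted_plan" for i
      using that first_idle_le is_state_state_at by simp
    show "state_at M (Suc i) \<in> Phi D (extracted_plan ! i) (state_at M i)"
      if "i < length extracted_plan" for i
      using that first_idle_le Occ_iff_extracted_plan state_at_Suc_in_Phi by simp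
  qed
  show "ss ! 0 = \<Gamma>"
    unfolding ss_def using state_at_0 by (simp del: upt_Suc)
  show "last ss = state_at M first_idle"
    unfolding ss_def by simp
qed

theorem plan_of_answer_set:
  assumes "deterministic D"
  shows "\<exists>k\<le>n. \<exists>as. length as = k
           \<and> (\<forall>i<k. \<forall>b. Occ b i \<in> M \<longleftrightarrow> b = as ! i)
           \<and> is_plan D \<Gamma> \<Delta> as
           \<and> (k < n \<longrightarrow> (\<forall>ss. trajectory D as ss \<and> ss ! 0 = \<Gamma> \<longrightarrow>
                               (\<forall>a. \<not> executable D a (last ss))))"
proof -
  have "state_at M n = state_at M first_idle"
    using state_at_deadlocked not_executable_at_first_idle first_idle_le
    by (cases "first_idle < n") auto
  then have plan: "is_plan D \<Gamma> \<Delta> extracted_plan"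
    unfolding is_plan_def using trajectory_extracted_plan goal_in_state_at by metis
  have deadlock: "\<not> executable D a (last ss)"
    if "first_idle < n" and "trajectory D extracted_plan ss" and "ss ! 0 = \<Gamma>" for ss a
  proof -
    have "ss = map (state_at M) [0..<Suc first_idle]"
      using trajectory_unique[OF assms] trajectory_extracted_plan that(2,3) by metis
    then show ?thesis
      using trajectory_extracted_plan(3) not_executable_at_first_idle that(1) by simp
  qed
  show ?thesis
    using first_idle_le length_extracted_plan Occ_iff_extracted_plan plan deadlock by blast
qed

end

section \<open>From plans to answer sets\<close>

locale plan_execution =
  fixes D :: "('f, 'a) domain" and \<Gamma> \<Delta> :: "'f lit set"
    and acts :: "'a list" and ss :: "'f lit set list"
  assumes trajectory: "trajectory D acts ss"
    and initial: "ss ! 0 = \<Gamma>"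
    and goal: "\<Delta> \<subseteq> last ss"
begin

abbreviation n :: nat where
  "n \<equiv> length acts"

lemma is_state_nth: "t \<le> n \<Longrightarrow> is_state D (ss ! t)"
  using trajectory unfolding trajectory_def by auto

lemma step_in_Phi: "t < n \<Longrightarrow> ss ! Suc t \<in> Phi D (acts ! t) (ss ! t)"
  using trajectory unfolding trajectory_def by auto

lemma executable_nth: "t < n \<Longrightarrow> executable D (acts ! t) (ss ! t)"
  using step_in_Phi unfolding mem_Phi_iff by blast

lemma nth_Suc_eq_closure:
  "t < n \<Longrightarrow> ss ! Suc t = closure D (E D (acts ! t) (ss ! t) \<union> (ss ! t \<inter> ss ! Suc t))"
  using step_in_Phi unfolding mem_Phi_iff by blast

text \<open>Rule (5) applies at time \<open>n\<close> as well, so an answer set must let some action occur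
  after the plan whenever one is executable in the final state; any one will do.\<close>
definition occurring :: "nat \<Rightarrow> 'a option" where
  "occurring t =
     (if t < n then Some (acts ! t)
      else if t = n \<and> (\<exists>a. executable D a (ss ! n)) then Some (SOME a. executable D a (ss ! n))
      else None)"

lemma occurring_SomeD: "occurring t = Some a \<Longrightarrow> t \<le> n \<and> executable D a (ss ! t)"
  unfolding occurring_def using executable_nth
  by (auto split: if_splits intro: someI_ex)

lemma occurring_if_executable: "t \<le> n \<Longrightarrow> executable D a (ss ! t) \<Longrightarrow> \<exists>b. occurring t = Some b"
  unfolding occurring_def by auto

definition model :: "('f, 'a) atom set" where
  "model = {Holds l t | l t. t \<le> n \<and> l \<in> ss ! t}
      \<union> {Possible a t | a t. t \<le> n \<and> executable D a (ss ! t)}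
      \<union> {Occ a t | a t. occurring t = Some a}
      \<union> {Nocc a t | a t. \<exists>b. occurring t = Some b \<and> a \<noteq> b}
      \<union> {Goal}"

lemma mem_model_iff [simp]:
  "Holds l t \<in> model \<longleftrightarrow> t \<le> n \<and> l \<in> ss ! t"
  "Possible a t \<in> model \<longleftrightarrow> t \<le> n \<and> executable D a (ss ! t)"
  "Occ a t \<in> model \<longleftrightarrow> occurring t = Some a"
  "Nocc a t \<in> model \<longleftrightarrow> (\<exists>b. occurring t = Some b \<and> a \<noteq> b)"
  "Goal \<in> model"
  unfolding model_def by auto

lemma Holds_in_model_if_rule:
  assumes "(Some (Holds l t), pos, neg) \<in> prog_Pi D \<Gamma> \<Delta> n"
    and "neg \<inter> model = {}" and "pos \<subseteq> model"
  shows "t \<le> n \<and> l \<in> ss ! t"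
  using assms(1)
proof (cases rule: prog_Pi_Holds_ruleE)
  case init
  then show ?thesis using initial by simp
next
  case (dynamic a P t')
  then have "Occ a t' \<in> model" "hs P t' \<subseteq> model"
    using assms(3) by auto
  then have "occurring t' = Some a" "P \<subseteq> ss ! t'"
    by (auto simp: hs_subset_iff)
  then have "l \<in> E D (acts ! t') (ss ! t')"
    using dynamic unfolding E_def by (auto simp: occurring_def)
  then have "l \<in> closure D (E D (acts ! t') (ss ! t') \<union> (ss ! t' \<inter> ss ! Suc t'))"
    using subset_closure by blast
  then show ?thesis
    using nth_Suc_eq_closure[OF dynamic(2), symmetric] dynamic by simp
next
  case (static P)
  then have "P \<subseteq> ss ! t"
    using assms(3) by (auto simp: hs_def)
  then show ?thesis
    using is_state_nth static unfolding is_state_def closed_under_def by blast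
next
  case (inertia t')
  then have "comp l \<notin> ss ! t"
    using assms(2) by auto
  moreover have "is_interpretation (ss ! t)"
    using is_state_nth inertia(1,2) unfolding is_state_def by simp
  ultimately show ?thesis
    using interpretation_comp inertia(1,2) by auto
qed

lemma closed_under_reduct_model: "closed_under_reduct (prog_Pi D \<Gamma> \<Delta> n) model model"
  unfolding closed_under_reduct_def
proof (intro allI impI, elim conjE)
  fix h pos neg
  assume rule: "(Some h, pos, neg) \<in> prog_Pi D \<Gamma> \<Delta> n" and "neg \<inter> model = {}" "pos \<subseteq> model"
  show "h \<in> model"
  proof (cases h)
    case (Holds l t)
    then show ?thesis
      using Holds_in_model_if_rule rule \<open>neg \<inter> model = {}\<close> \<open>pos \<subseteq> model\<close> by simp
  next
    case (Possible a t)
    then obtain P where "(a, P) \<in> execs D" "t \<le> n" "pos = hs P t"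
      using rule by (auto elim: prog_Pi_Possible_ruleE)
    moreover from this have "P \<subseteq> ss ! t"
      using \<open>pos \<subseteq> model\<close> by (auto simp: hs_subset_iff)
    ultimately show ?thesis
      using Possible by (auto simp: executable_def)
  next
    case (Occ a t)
    then have "t \<le> n" "executable D a (ss ! t)" "Nocc a t \<notin> model"
      using rule \<open>neg \<inter> model = {}\<close> \<open>pos \<subseteq> model\<close> by (auto elim: prog_Pi_Occ_ruleE)
    then show ?thesis
      using Occ occurring_if_executable by auto
  next
    case (Nocc a t)
    then show ?thesis
      using rule \<open>pos \<subseteq> model\<close> by (auto elim: prog_Pi_Nocc_ruleE)
  next
    case Goal
    then show ?thesis by simp
  qed
qed

context
  fixes X
  assumes X_closed: "closed_under_reduct (prog_Pi D \<Gamma> \<Delta> n) model X"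
begin

lemma Possible_in_closed:
  assumes "t \<le> n" and "executable D a (ss ! t)" and "\<forall>l\<in>ss ! t. Holds l t \<in> X"
  shows "Possible a t \<in> X"
proof -
  obtain P where "(a, P) \<in> execs D" "P \<subseteq> ss ! t"
    using assms(2) unfolding executable_def by blast
  then show ?thesis
    using closed_under_reductD[OF X_closed prog_Pi_executable_rule[of a P D t n]] assms
    by (auto simp: hs_def)
qed

lemma Occ_in_closed:
  assumes "occurring t = Some a" and "\<forall>l\<in>ss ! t. Holds l t \<in> X"
  shows "Occ a t \<in> X"
proof -
  have "t \<le> n" "Possible a t \<in> X"
    using occurring_SomeD[OF assms(1)] Possible_in_closed assms(2) by auto
  then show ?thesis
    using closed_under_reductD[OF X_closed prog_Pi_Occ_rule[of t n a]] assms(1) by auto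
qed

lemma Holds_in_closed: "t \<le> n \<Longrightarrow> \<forall>l\<in>ss ! t. Holds l t \<in> X"
proof (induction t)
  case 0
  then show ?case
    using closed_under_reductD[OF X_closed prog_Pi_init_rule] initial by auto
next
  case (Suc t)
  then have t: "t < n" and IH: "\<forall>l\<in>ss ! t. Holds l t \<in> X"
    by auto
  let ?Y = "{l. Holds l (Suc t) \<in> X}"
  have "E D (acts ! t) (ss ! t) \<subseteq> ?Y"
  proof
    fix l assume "l \<in> E D (acts ! t) (ss ! t)"
    then obtain P where P: "(acts ! t, l, P) \<in> dynamic D" "P \<subseteq> ss ! t"
      unfolding E_def by blast
    have "Occ (acts ! t) t \<in> X" "Possible (acts ! t) t \<in> X" "hs P t \<subseteq> X"
      using Occ_in_closed Possible_in_closed executable_nth t IH P(2)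
      by (auto simp: occurring_def hs_def)
    then show "l \<in> ?Y"
      using closed_under_reductD[OF X_closed prog_Pi_dynamic_rule[OF P(1) t]] by simp
  qed
  moreover have "ss ! t \<inter> ss ! Suc t \<subseteq> ?Y"
  proof
    fix l assume l: "l \<in> ss ! t \<inter> ss ! Suc t"
    moreover have "consistent_lits (ss ! Suc t)"
      using is_state_nth[of "Suc t"] t unfolding is_state_def is_interpretation_def by simp
    ultimately have "comp l \<notin> ss ! Suc t"
      using consistent_comp by blast
    then show "l \<in> ?Y"
      using closed_under_reductD[OF X_closed prog_Pi_inertia_rule[OF t, of l]] l IH by simp
  qed
  moreover have "closed_under D ?Y"
    unfolding closed_under_def
    using closed_under_reductD[OF X_closed prog_Pi_static_rule] Suc.prems by (auto simp: hs_def)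
  ultimately have "closure D (E D (acts ! t) (ss ! t) \<union> (ss ! t \<inter> ss ! Suc t)) \<subseteq> ?Y"
    by (intro closure_minimal) auto
  then show ?case
    using nth_Suc_eq_closure[OF t, symmetric] by auto
qed

lemma model_subset_closed: "model \<subseteq> X"
proof
  fix x assume x: "x \<in> model"
  show "x \<in> X"
  proof (cases x)
    case (Holds l t)
    then show ?thesis using x Holds_in_closed by auto
  next
    case (Possible a t)
    then show ?thesis using x Possible_in_closed Holds_in_closed by auto
  next
    case (Occ a t)
    then show ?thesis using x Occ_in_closed Holds_in_closed occurring_SomeD by auto
  next
    case (Nocc a t)
    then obtain b where b: "occurring t = Some b" "a \<noteq> b"
      using x by auto
    then have "t \<le> n" "Occ b t \<in> X"
      using occurring_SomeD Occ_in_closed Holds_in_closed by auto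
    then show ?thesis
      using closed_under_reductD[OF X_closed prog_Pi_Nocc_rule[OF b(2)]] Nocc by simp
  next
    case Goal
    have "hs \<Delta> n \<subseteq> X"
      using goal Holds_in_closed[of n] trajectory_last[OF trajectory] by (auto simp: hs_def)
    then show ?thesis
      using closed_under_reductD[OF X_closed prog_Pi_Goal_rule] Goal by simp
  qed
qed

end

lemma model_satisfies_constraints:
  assumes "(None, pos, neg) \<in> prog_Pi D \<Gamma> \<Delta> n" and "neg \<inter> model = {}"
  shows "\<not> pos \<subseteq> model"
  using assms(1)
proof (cases rule: prog_Pi_constraintE)
  case (consistency f t)
  then show ?thesis
    using is_state_nth[of t] unfolding is_state_def is_interpretation_def consistent_lits_def
    by auto
next
  case goal
  then show ?thesis using assms(2) by simp
qed

theorem answer_set_model: "answer_set (prog_Pi D \<Gamma> \<Delta> n) model"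
  unfolding answer_set_iff
  using closed_under_reduct_model model_subset_closed model_satisfies_constraints by blast

lemma Occ_plan_in_model: "i < n \<Longrightarrow> Occ (acts ! i) i \<in> model"
  by (simp add: occurring_def)

end

lemma answer_set_of_plan:
  assumes "is_plan D \<Gamma> \<Delta> as"
  shows "\<exists>M. answer_set (prog_Pi D \<Gamma> \<Delta> (length as)) M \<and> (\<forall>i<length as. Occ (as ! i) i \<in> M)"
proof -
  obtain ss where "plan_execution D \<Gamma> \<Delta> as ss"
    using assms unfolding is_plan_def plan_execution_def by blast
  then interpret plan_execution D \<Gamma> \<Delta> as ss .
  show ?thesis
    using answer_set_model Occ_plan_in_model by blast
qed

theorem corollary1:
  fixes D :: "('f::finite, 'a::finite) domain"
    and \<Gamma> \<Delta> :: "'f lit set"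
    and n :: nat
  assumes "finite (static D)" and "finite (dynamic D)" and "finite (execs D)"
    and "problem_consistent D \<Gamma>"
    and "deterministic D"
  shows "(\<forall>as. length as = n \<and> is_plan D \<Gamma> \<Delta> as \<longrightarrow>
            (\<exists>M. answer_set (prog_Pi D \<Gamma> \<Delta> n) M \<and> (\<forall>i<n. Occ (as ! i) i \<in> M)))
       \<and> (\<forall>M. answer_set (prog_Pi D \<Gamma> \<Delta> n) M \<longrightarrow>
            (\<exists>k\<le>n. \<exists>as. length as = k
               \<and> (\<forall>i<k. \<forall>b. Occ b i \<in> M \<longleftrightarrow> b = as ! i)
               \<and> is_plan D \<Gamma> \<Delta> as
               \<and> (k < n \<longrightarrow> (\<forall>ss. trajectory D as ss \<and> ss ! 0 = \<Gamma> \<longrightarrow>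
                                   (\<forall>a. \<not> executable D a (last ss))))))"
proof -
  have initial_state: "is_state D \<Gamma>"
    using assms(4) unfolding problem_consistent_def by simp
  show ?thesis
    using answer_set_of_plan
      Pi_answer_set.plan_of_answer_set[OF Pi_answer_set.intro[OF _ initial_state] assms(5)]
    by (intro conjI allI impI) auto
qed

end
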